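(* If $L$ is a flat layout, then $\mathrm{coal}^\flat(L)$ is the unique flat layout of minimal rank whose layout function equals $\Phi_L$.
   Context: A flat layout $L=(s_1,\dots,s_m):(d_1,\dots,d_m)$ consists of a tuple of positive integers and a tuple of nonnegative integers of the same length $m=\mathrm{rank}(L)$; its modes are $s_i:d_i$. Its layout function $\Phi_L:[0,s_1\cdots s_m)\to\mathbb{Z}$ is $\Phi_L(x)=\sum_i x_id_i$ with $x_i=\lfloor x/(s_1\cdots s_{i-1})\rfloor\bmod s_i$. $\mathrm{squeeze}(L)$ removes all modes with $s_i=1$; $\mathrm{coal}^\flat(L)$ is obtained from $\mathrm{squeeze}(L)$ by repeatedly replacing adjacent modes $s_i,s_{i+1}:d_i,d_{i+1}$ with $d_{i+1}=s_id_i$ by the single mode $s_is_{i+1}:d_i$ until no such pair remains. *)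

theory Defs
  imports Main
begin

text \<open>A flat layout is a list of modes (s_i, d_i): shape s_i (positive) and stride d_i (nonnegative).\<close>
type_synonym layout = "(nat \<times> nat) list"

definition flat_layout :: "layout \<Rightarrow> bool" where
  "flat_layout L \<longleftrightarrow> (\<forall>m \<in> set L. fst m > 0)"

definition rank :: "layout \<Rightarrow> nat" where
  "rank L = length L"

definition lsize :: "layout \<Rightarrow> nat" where
  "lsize L = prod_list (map fst L)"

definition layout_coord :: "layout \<Rightarrow> nat \<Rightarrow> nat \<Rightarrow> nat" where
  "layout_coord L x i = (x div prod_list (map fst (take i L))) mod fst (L ! i)"

definition Phi_val :: "layout \<Rightarrow> nat \<Rightarrow> int" where
  "Phi_val L x = (\<Sum>i<length L. int (layout_coord L x i) * int (snd (L ! i)))"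

definition Phi :: "layout \<Rightarrow> nat \<Rightarrow> int option" where
  "Phi L = (\<lambda>x. if x < lsize L then Some (Phi_val L x) else None)"

definition squeeze :: "layout \<Rightarrow> layout" where
  "squeeze L = filter (\<lambda>m. fst m \<noteq> 1) L"

definition coal_step :: "(layout \<times> layout) set" where
  "coal_step = {(xs @ [(s1, d1), (s2, d2)] @ ys, xs @ [(s1 * s2, d1)] @ ys) | xs ys s1 d1 s2 d2.
                 d2 = s1 * d1}"

definition is_coal_flat :: "layout \<Rightarrow> layout \<Rightarrow> bool" where
  "is_coal_flat L M \<longleftrightarrow> (squeeze L, M) \<in> coal_step\<^sup>* \<and> (\<nexists>N. (M, N) \<in> coal_step)"

end

theory Submission
  imports Defs
begin

text \<open>
  Both a coalescing step and the removal of a mode of size 1 leave the layout function unchanged,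
  and they only shorten the layout, so every result of \<open>coal\<^sup>\<flat>\<close> has the layout function of
  \<open>L\<close> and rank at most that of any layout it came from. Minimality and uniqueness then follow from
  a rigidity property: a layout with all sizes \<open>> 1\<close> and no coalescable adjacent pair is
  determined by its layout function. Indeed \<open>\<Phi>(1)\<close> is the first stride \<open>d\<close>; if the first size
  \<open>s\<close> were smaller than the other layout's first size, \<open>\<Phi>(s)\<close> would be both \<open>s d\<close> and the second
  stride, making the first two modes coalescable; and restricting \<open>\<Phi>\<close> to multiples of \<open>s\<close> gives
  the layout function of the tail.
\<close>

lemma Phi_val_Nil [simp]: "Phi_val [] x = 0"
  by (simp add: Phi_val_def)

lemma Phi_val_Cons [simp]:
  "Phi_val ((s, d) # L) x = int (x mod s * d) + Phi_val L (x div s)"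
proof -
  have coord_Suc: "layout_coord ((s, d) # L) x (Suc i) = layout_coord L (x div s) i" for i
    by (simp add: layout_coord_def div_mult2_eq)
  show ?thesis
    unfolding Phi_val_def
    by (simp add: sum.lessThan_Suc_shift coord_Suc del: sum.lessThan_Suc)
       (simp add: layout_coord_def)
qed

lemma Phi_val_0 [simp]: "Phi_val L 0 = 0"
  by (simp add: Phi_val_def layout_coord_def)

lemma lsize_Nil [simp]: "lsize [] = 1"
  by (simp add: lsize_def)

lemma lsize_Cons [simp]: "lsize ((s, d) # L) = s * lsize L"
  by (simp add: lsize_def)

lemma lsize_pos: "flat_layout L \<Longrightarrow> 0 < lsize L"
  by (induction L) (auto simp: flat_layout_def)

lemma lsize_Cons_ge: "flat_layout L \<Longrightarrow> s \<le> lsize ((s, d) # L)"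
  using lsize_pos[of L] by simp

lemma Phi_eq_iff:
  "Phi A = Phi B \<longleftrightarrow> lsize A = lsize B \<and> (\<forall>x < lsize A. Phi_val A x = Phi_val B x)"
proof
  assume eq: "Phi A = Phi B"
  have "lsize A = lsize B"
  proof (rule ccontr)
    assume "lsize A \<noteq> lsize B"
    then have "Phi A (min (lsize A) (lsize B)) \<noteq> Phi B (min (lsize A) (lsize B))"
      by (auto simp: Phi_def min_def)
    with eq show False by simp
  qed
  with eq show "lsize A = lsize B \<and> (\<forall>x < lsize A. Phi_val A x = Phi_val B x)"
    by (auto simp: Phi_def fun_eq_iff split: if_splits)
qed (auto simp: Phi_def fun_eq_iff)

definition squeezed :: "layout \<Rightarrow> bool" where
  "squeezed L \<longleftrightarrow> (\<forall>m \<in> set L. 1 < fst m)"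

lemma squeezed_Cons [simp]: "squeezed ((s, d) # L) \<longleftrightarrow> 1 < s \<and> squeezed L"
  by (simp add: squeezed_def)

lemma flat_layout_if_squeezed: "squeezed L \<Longrightarrow> flat_layout L"
  by (auto simp: squeezed_def flat_layout_def)

lemma squeezed_squeeze: "flat_layout L \<Longrightarrow> squeezed (squeeze L)"
  by (auto simp: squeezed_def flat_layout_def squeeze_def)

lemma Phi_squeeze: "Phi (squeeze L) = Phi L"
proof -
  have "lsize (squeeze L) = lsize L \<and> Phi_val (squeeze L) x = Phi_val L x" for x
    by (induction L arbitrary: x) (auto simp: squeeze_def)
  then show ?thesis
    by (simp add: Phi_def fun_eq_iff)
qed

lemma length_squeeze_eq_iff: "length (squeeze L) = length L \<longleftrightarrow> squeeze L = L"
  unfolding squeeze_def by (metis filter_id_conv length_filter_less nat_neq_iff)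

fun coalesced :: "layout \<Rightarrow> bool" where
  "coalesced ((s1, d1) # (s2, d2) # L) \<longleftrightarrow> d2 \<noteq> s1 * d1 \<and> coalesced ((s2, d2) # L)"
| "coalesced _ \<longleftrightarrow> True"

lemma coalesced_tl: "coalesced (m # L) \<Longrightarrow> coalesced L"
  by (cases m; cases L) auto

lemma coal_stepI: "(xs @ (s1, d) # (s2, s1 * d) # ys, xs @ (s1 * s2, d) # ys) \<in> coal_step"
  unfolding coal_step_def by force

lemma coal_stepE:
  assumes "(A, B) \<in> coal_step"
  obtains xs ys s1 s2 d where "A = xs @ (s1, d) # (s2, s1 * d) # ys"
    and "B = xs @ (s1 * s2, d) # ys"
  using assms unfolding coal_step_def by auto

lemma coal_step_Cons: "(A, B) \<in> coal_step \<Longrightarrow> (m # A, m # B) \<in> coal_step"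
  by (erule coal_stepE) (metis append_Cons coal_stepI)

lemma coalesced_if_irreducible: "\<nexists>N. (M, N) \<in> coal_step \<Longrightarrow> coalesced M"
proof (induction M rule: coalesced.induct)
  case (1 s1 d1 s2 d2 L)
  have "((s1, d1) # (s2, s1 * d1) # L, (s1 * s2, d1) # L) \<in> coal_step"
    using coal_stepI[of "[]"] by simp
  with "1.prems" have "d2 \<noteq> s1 * d1"
    by blast
  moreover have "\<nexists>N. ((s2, d2) # L, N) \<in> coal_step"
    using "1.prems" coal_step_Cons by blast
  ultimately show ?case
    using "1.IH" by simp
qed auto

lemma length_coal_step: "(A, B) \<in> coal_step \<Longrightarrow> length B < length A"
  by (erule coal_stepE) simp

lemma coal_steps_eq_or_length_less:
  "(A, B) \<in> coal_step\<^sup>* \<Longrightarrow> B = A \<or> length B < length A"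
  by (induction rule: rtrancl_induct) (auto dest: length_coal_step)

lemma coal_step_normal_form_exists: "\<exists>M. (A, M) \<in> coal_step\<^sup>* \<and> (\<nexists>N. (M, N) \<in> coal_step)"
proof (induction A rule: measure_induct_rule[where f = length])
  case (less A)
  show ?case
  proof (cases "\<exists>B. (A, B) \<in> coal_step")
    case True
    then obtain B where step: "(A, B) \<in> coal_step" ..
    from less[OF length_coal_step[OF step]] obtain M
      where "(B, M) \<in> coal_step\<^sup>*" "\<nexists>N. (M, N) \<in> coal_step"
      by blast
    with step show ?thesis
      by (meson converse_rtrancl_into_rtrancl)
  qed blast
qed

lemma Phi_val_coal_step:
  "Phi_val (xs @ (s1, d) # (s2, s1 * d) # ys) x = Phi_val (xs @ (s1 * s2, d) # ys) x"
proof (induction xs arbitrary: x)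
  case Nil
  have "int (x mod (s1 * s2) * d) = int (x mod s1 * d) + int (x div s1 mod s2 * (s1 * d))"
    by (simp add: mod_mult2_eq algebra_simps)
  then show ?case
    by (simp add: div_mult2_eq)
next
  case (Cons m xs)
  then show ?case
    by (cases m) simp
qed

lemma Phi_coal_steps: "(A, B) \<in> coal_step\<^sup>* \<Longrightarrow> Phi B = Phi A"
proof (induction rule: rtrancl_induct)
  case (step B C)
  from step.hyps(2) have "Phi C = Phi B"
    by (rule coal_stepE) (simp only: Phi_def Phi_val_coal_step, simp add: lsize_def mult.assoc)
  with step.IH show ?case
    by simp
qed simp

lemma squeezed_coal_steps: "(A, B) \<in> coal_step\<^sup>* \<Longrightarrow> squeezed A \<Longrightarrow> squeezed B"
proof (induction rule: rtrancl_induct)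
  case (step B C)
  then show ?case
    by (elim coal_stepE) (auto simp: squeezed_def one_less_mult)
qed

lemma Phi_Cons_cancel:
  assumes "0 < s" "Phi ((s, d) # M) = Phi ((s, d) # N)"
  shows "Phi M = Phi N"
proof -
  from assms(2) have "s * lsize M = s * lsize N"
    and vals: "\<forall>x < s * lsize M. Phi_val ((s, d) # M) x = Phi_val ((s, d) # N) x"
    unfolding Phi_eq_iff lsize_Cons by blast+
  then have "lsize M = lsize N"
    using assms(1) by simp
  moreover have "Phi_val M y = Phi_val N y" if "y < lsize M" for y
  proof -
    have "s * y < s * lsize M"
      using that assms(1) by simp
    with vals have "Phi_val ((s, d) # M) (s * y) = Phi_val ((s, d) # N) (s * y)"
      by blast
    with assms(1) show ?thesis
      by simp
  qed
  ultimately show ?thesis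
    by (simp add: Phi_eq_iff)
qed

lemma squeezed_lsize_gt_1:
  assumes "squeezed (m # L)"
  shows "1 < lsize (m # L)"
proof (cases m)
  case (Pair s d)
  with assms have "1 < s" "flat_layout L"
    by (simp_all add: flat_layout_if_squeezed)
  with Pair show ?thesis
    using lsize_Cons_ge[of L s d] unfolding Pair by linarith
qed

lemma head_stride_eq:
  assumes "squeezed ((s, d) # M)" "squeezed ((t, e) # N)"
    and "Phi ((s, d) # M) = Phi ((t, e) # N)"
  shows "d = e"
proof -
  have "1 < lsize ((s, d) # M)"
    using assms(1) by (rule squeezed_lsize_gt_1)
  with assms(3) have "Phi_val ((s, d) # M) 1 = Phi_val ((t, e) # N) 1"
    unfolding Phi_eq_iff by blast
  with assms show ?thesis
    by simp
qed

lemma head_shape_le: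
  assumes "squeezed ((s, d) # M)" "coalesced ((s, d) # M)" "squeezed ((t, d) # N)"
    and Phi_eq: "Phi ((s, d) # M) = Phi ((t, d) # N)"
  shows "t \<le> s"
proof (rule ccontr)
  assume "\<not> t \<le> s"
  moreover have "t \<le> lsize ((t, d) # N)"
    using assms(3) lsize_Cons_ge flat_layout_if_squeezed squeezed_Cons by blast
  moreover have "lsize ((s, d) # M) = lsize ((t, d) # N)"
    using Phi_eq by (simp only: Phi_eq_iff)
  ultimately have "s < lsize ((s, d) # M)"
    by linarith
  then obtain s' d' M' where M: "M = (s', d') # M'"
    by (cases M) auto
  have "Phi_val ((s, d) # M) s = Phi_val ((t, d) # N) s"
    using Phi_eq \<open>s < lsize ((s, d) # M)\<close> unfolding Phi_eq_iff by blast
  \<comment> \<open>On the left, \<open>s\<close> has coordinates \<open>(0, 1, 0, \<dots>)\<close>; on the right, \<open>(s, 0, \<dots>)\<close>.\<close>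
  with \<open>\<not> t \<le> s\<close> M assms(1) have "int d' = int (s * d)"
    by simp
  with assms(2) M show False
    by (simp only: of_nat_eq_iff coalesced.simps)
qed

lemma squeezed_coalesced_unique:
  "squeezed M \<Longrightarrow> coalesced M \<Longrightarrow> squeezed N \<Longrightarrow> coalesced N \<Longrightarrow> Phi M = Phi N \<Longrightarrow> M = N"
proof (induction M arbitrary: N)
  case Nil
  have "lsize N = 1"
    using Nil.prems(5) unfolding Phi_eq_iff by simp
  with Nil.prems(3) show ?case
    by (cases N) (auto dest: squeezed_lsize_gt_1)
next
  case (Cons m M)
  obtain s d where m: "m = (s, d)"
    by fastforce
  have "1 < lsize N"
    using Cons.prems(1,5) squeezed_lsize_gt_1 unfolding Phi_eq_iff by metis
  then obtain t e N' where N0: "N = (t, e) # N'"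
    by (cases N) auto
  have "d = e"
    using Cons.prems(1,3,5) unfolding m N0 by (rule head_stride_eq)
  with N0 have N: "N = (t, d) # N'"
    by simp
  note prems = Cons.prems[unfolded m N]
  have "s = t"
    using head_shape_le[OF prems(3,4,1) prems(5)[symmetric]] head_shape_le[OF prems(1,2,3,5)]
    by (rule antisym)
  have "Phi M = Phi N'"
  proof (rule Phi_Cons_cancel)
    show "0 < s"
      using prems(1) by simp
    show "Phi ((s, d) # M) = Phi ((s, d) # N')"
      using prems(5) unfolding \<open>s = t\<close> .
  qed
  with prems have "M = N'"
    by (intro Cons.IH) (simp_all add: coalesced_tl)
  with m N \<open>s = t\<close> show ?case
    by simp
qed

lemma is_coal_flat_exists: "\<exists>M. is_coal_flat L M"
  using coal_step_normal_form_exists by (auto simp: is_coal_flat_def)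

lemma is_coal_flat_canonical:
  assumes "flat_layout L" "is_coal_flat L M"
  shows "squeezed M" "coalesced M" "Phi M = Phi L"
  using assms squeezed_squeeze squeezed_coal_steps Phi_coal_steps Phi_squeeze coalesced_if_irreducible
  by (auto simp: is_coal_flat_def)

lemma is_coal_flat_rank:
  assumes "is_coal_flat L M"
  shows "rank M \<le> rank L" "rank M = rank L \<Longrightarrow> M = L"
proof -
  have steps: "(squeeze L, M) \<in> coal_step\<^sup>*"
    using assms by (simp add: is_coal_flat_def)
  have "length (squeeze L) \<le> length L"
    by (simp add: squeeze_def)
  with coal_steps_eq_or_length_less[OF steps] show "rank M \<le> rank L"
    by (auto simp: rank_def)
  assume "rank M = rank L"
  with coal_steps_eq_or_length_less[OF steps] \<open>length (squeeze L) \<le> length L\<close>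
  have "M = squeeze L" "length (squeeze L) = length L"
    by (auto simp: rank_def)
  then show "M = L"
    by (simp add: length_squeeze_eq_iff)
qed

theorem mainTheorem11:
  assumes "flat_layout L"
  shows "(\<exists>M. is_coal_flat L M) \<and>
         (\<forall>M. is_coal_flat L M \<longrightarrow>
            flat_layout M \<and> Phi M = Phi L \<and>
            (\<forall>N. flat_layout N \<and> Phi N = Phi L \<longrightarrow> rank M \<le> rank N) \<and>
            (\<forall>N. flat_layout N \<and> Phi N = Phi L \<and> rank N = rank M \<longrightarrow> N = M))"
proof (intro conjI allI impI is_coal_flat_exists)
  fix M assume M: "is_coal_flat L M"
  note M_canonical = is_coal_flat_canonical[OF assms M]
  show "flat_layout M" "Phi M = Phi L"
    using M_canonical by (auto intro: flat_layout_if_squeezed)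
  have coal_N: "is_coal_flat N M" if "flat_layout N" "Phi N = Phi L" for N
  proof -
    obtain K where K: "is_coal_flat N K"
      using is_coal_flat_exists by blast
    have "K = M"
      using squeezed_coalesced_unique is_coal_flat_canonical[OF that(1) K] M_canonical that(2)
      by metis
    with K show ?thesis
      by simp
  qed
  show "rank M \<le> rank N" if "flat_layout N \<and> Phi N = Phi L" for N
    using that coal_N is_coal_flat_rank(1) by blast
  show "N = M" if "flat_layout N \<and> Phi N = Phi L \<and> rank N = rank M" for N
    using that coal_N is_coal_flat_rank(2) by metis
qed

end
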